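(* Let $n\ge2$ and let $L_1,\dots,L_n$ be closed line segments parallel to the $y$-axis, where $L_i$ has end-points $A_i(x_i,a_i)$ and $B_i(x_i,b_i)$ with $a_i\le b_i$ for all $i$, and $x_1<x_2<\dots<x_n$. Let $s<t$ be indices such that the slope of the line $A_sB_t$ is the minimum of the slopes of the lines $A_iB_j$ over all $1\le i<j\le n$, and let $u<v$ be indices such that the slope of the line $B_uA_v$ is the maximum of the slopes of the lines $B_iA_j$ over all $1\le i<j\le n$. Assume that at least one straight line intersects all the segments $L_1,\dots,L_n$. Then, among all straight lines intersecting all the segments $L_1,\dots,L_n$, the line $A_sB_t$ has the maximum slope and the line $B_uA_v$ has the minimum slope. *)

theory Defs
  imports Complex_Main
begin

text \<open>Segment i: vertical segment from (x i, a i) to (x i, b i).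
  A non-vertical line y = m*X + c meets segment i iff a i <= m * x i + c <= b i.\<close>
definition meets_all :: "nat \<Rightarrow> (nat \<Rightarrow> real) \<Rightarrow> (nat \<Rightarrow> real) \<Rightarrow> (nat \<Rightarrow> real) \<Rightarrow> real \<Rightarrow> real \<Rightarrow> bool" where
  "meets_all n x a b m c \<longleftrightarrow> (\<forall>i\<in>{1..n}. a i \<le> m * x i + c \<and> m * x i + c \<le> b i)"

definition slope :: "real \<Rightarrow> real \<Rightarrow> real \<Rightarrow> real \<Rightarrow> real" where
  "slope x1 y1 x2 y2 = (y2 - y1) / (x2 - x1)"

end

theory Submission
  imports Defs
begin

text \<open>
  Any line meeting all segments passes above \<open>A\<^sub>s\<close> and below \<open>B\<^sub>t\<close>, so its slope is at most
  that of \<open>A\<^sub>sB\<^sub>t\<close>. Conversely the line \<open>A\<^sub>sB\<^sub>t\<close> meets every segment: minimality of its slope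
  over the pairs \<open>A\<^sub>sB\<^sub>i\<close> and \<open>A\<^sub>iB\<^sub>t\<close> settles the segments to the right of \<open>s\<close> resp. left
  of \<open>t\<close>; for the remaining ones we compare with a line that meets all segments, which
  is no steeper. Reflecting in the \<open>x\<close>-axis swaps \<open>A\<close> and \<open>B\<close>, negates all slopes and turns
  the statement about \<open>B\<^sub>uA\<^sub>v\<close> into the one about \<open>A\<^sub>sB\<^sub>t\<close>.
\<close>

lemma le_slope_iff: "x1 < x2 \<Longrightarrow> M \<le> slope x1 y1 x2 y2 \<longleftrightarrow> M * (x2 - x1) \<le> y2 - y1"
  unfolding slope_def by (simp add: pos_le_divide_eq)

lemma slope_times_diff: "x1 < x2 \<Longrightarrow> slope x1 y1 x2 y2 * (x2 - x1) = y2 - y1"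
  unfolding slope_def by simp

lemma slope_uminus: "slope x1 (- y1) x2 (- y2) = - slope x1 y1 x2 y2"
  unfolding slope_def by (simp add: minus_divide_left)

lemma meets_all_reflect:
  "meets_all n x (\<lambda>i. - b i) (\<lambda>i. - a i) (- m) (- c) \<longleftrightarrow> meets_all n x a b m c"
  unfolding meets_all_def by auto

lemma meets_all_slope_le:
  assumes "meets_all n x a b m c" and "1 \<le> i" "i < j" "j \<le> n" and "x i < x j"
  shows "m \<le> slope (x i) (a i) (x j) (b j)"
proof -
  have "a i \<le> m * x i + c" "m * x j + c \<le> b j"
    using assms(1-4) unfolding meets_all_def by auto
  then have "m * (x j - x i) \<le> b j - a i" by (simp add: algebra_simps)
  then show ?thesis using assms(5) by (simp add: le_slope_iff)
qed

lemma min_slope_line_meets_all: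
  fixes x a b :: "nat \<Rightarrow> real"
  assumes x_mono: "\<And>i j. i \<in> {1..n} \<Longrightarrow> j \<in> {1..n} \<Longrightarrow> i < j \<Longrightarrow> x i < x j"
    and st: "1 \<le> s" "s < t" "t \<le> n"
    and min: "\<And>i j. 1 \<le> i \<Longrightarrow> i < j \<Longrightarrow> j \<le> n \<Longrightarrow>
           slope (x s) (a s) (x t) (b t) \<le> slope (x i) (a i) (x j) (b j)"
    and line: "meets_all n x a b m c"
  shows "meets_all n x a b (slope (x s) (a s) (x t) (b t)) (a s - slope (x s) (a s) (x t) (b t) * x s)"
proof -
  define M where "M = slope (x s) (a s) (x t) (b t)"
  have m_le_M: "m \<le> M"
    unfolding M_def using meets_all_slope_le[OF line st] x_mono st by auto
  have through_B_t: "a s + M * (x t - x s) = b t"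
    unfolding M_def using slope_times_diff[of "x s" "x t"] x_mono st by auto
  have on_line: "a i \<le> m * x i + c" "m * x i + c \<le> b i" if "i \<in> {1..n}" for i
    using line that unfolding meets_all_def by auto
  have "a i \<le> a s + M * (x i - x s) \<and> a s + M * (x i - x s) \<le> b i" if i: "i \<in> {1..n}" for i
  proof
    show "a i \<le> a s + M * (x i - x s)"
    proof (cases "i < t")
      case True
      then have "M * (x t - x i) \<le> b t - a i"
        using min[of i t] x_mono[of i t] i st by (simp add: M_def le_slope_iff)
      then show ?thesis using through_B_t by (simp add: algebra_simps)
    next
      case False
      then have "x t \<le> x i" using x_mono[of t i] i st by (cases "t = i") auto
      then have "m * (x i - x t) \<le> M * (x i - x t)" using m_le_M by (simp add: mult_right_mono)
      then show ?thesis using on_line[OF i] on_line[of t] through_B_t st by (simp add: algebra_simps)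
    qed
    show "a s + M * (x i - x s) \<le> b i"
    proof (cases "s < i")
      case True
      then show ?thesis
        using min[of s i] x_mono[of s i] i st by (simp add: M_def le_slope_iff algebra_simps)
    next
      case False
      then have "x i \<le> x s" using x_mono[of i s] i st by (cases "i = s") auto
      then have "M * (x s - x i) \<ge> m * (x s - x i)" using m_le_M by (simp add: mult_right_mono)
      then show ?thesis using on_line[OF i] on_line[of s] st by (simp add: algebra_simps)
    qed
  qed
  then show ?thesis unfolding meets_all_def M_def[symmetric] by (simp add: algebra_simps)
qed

theorem corollary2:
  fixes n :: nat and x a b :: "nat \<Rightarrow> real" and s t u v :: nat
  assumes "n \<ge> 2"
    and "\<And>i. i \<in> {1..n} \<Longrightarrow> a i \<le> b i"
    and "\<And>i j. i \<in> {1..n} \<Longrightarrow> j \<in> {1..n} \<Longrightarrow> i < j \<Longrightarrow> x i < x j"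
    and "1 \<le> s" "s < t" "t \<le> n"
    and "\<And>i j. 1 \<le> i \<Longrightarrow> i < j \<Longrightarrow> j \<le> n \<Longrightarrow>
           slope (x s) (a s) (x t) (b t) \<le> slope (x i) (a i) (x j) (b j)"
    and "1 \<le> u" "u < v" "v \<le> n"
    and "\<And>i j. 1 \<le> i \<Longrightarrow> i < j \<Longrightarrow> j \<le> n \<Longrightarrow>
           slope (x i) (b i) (x j) (a j) \<le> slope (x u) (b u) (x v) (a v)"
    and "\<exists>m c. meets_all n x a b m c"
  shows "meets_all n x a b (slope (x s) (a s) (x t) (b t)) (a s - slope (x s) (a s) (x t) (b t) * x s)
       \<and> (\<forall>m c. meets_all n x a b m c \<longrightarrow> m \<le> slope (x s) (a s) (x t) (b t))
       \<and> meets_all n x a b (slope (x u) (b u) (x v) (a v)) (b u - slope (x u) (b u) (x v) (a v) * x u)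
       \<and> (\<forall>m c. meets_all n x a b m c \<longrightarrow> slope (x u) (b u) (x v) (a v) \<le> m)"
proof -
  obtain m c where line: "meets_all n x a b m c" using assms(12) by blast
  define N where "N = slope (x u) (b u) (x v) (a v)"
  have reflected_min: "slope (x u) (- b u) (x v) (- a v) \<le> slope (x i) (- b i) (x j) (- a j)"
    if "1 \<le> i" "i < j" "j \<le> n" for i j
    using assms(11)[OF that] by (simp add: slope_uminus)
  have "meets_all n x (\<lambda>i. - b i) (\<lambda>i. - a i) (slope (x u) (- b u) (x v) (- a v))
      (- b u - slope (x u) (- b u) (x v) (- a v) * x u)"
    using min_slope_line_meets_all[where n=n and x=x and s=u and t=v and a="\<lambda>i. - b i"
        and b="\<lambda>i. - a i" and m="- m" and c="- c"]
      assms(3,8-10) reflected_min line meets_all_reflect by blast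
  then have "meets_all n x (\<lambda>i. - b i) (\<lambda>i. - a i) (- N) (- (b u - N * x u))"
    by (simp add: slope_uminus N_def)
  then have "meets_all n x a b N (b u - N * x u)"
    using meets_all_reflect[of n x b a N "b u - N * x u"] by simp
  moreover have "N \<le> m'" if "meets_all n x a b m' c'" for m' c'
    using meets_all_slope_le[of n x "\<lambda>i. - b i" "\<lambda>i. - a i" "- m'" "- c'" u v]
      that assms(3,8-10) by (simp add: meets_all_reflect slope_uminus N_def)
  moreover have "m' \<le> slope (x s) (a s) (x t) (b t)" if "meets_all n x a b m' c'" for m' c'
    using meets_all_slope_le[OF that assms(4-6)] assms(3-6) by simp
  ultimately show ?thesis
    using min_slope_line_meets_all[OF assms(3-7) line] unfolding N_def by blast
qed

end
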